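(* In the linear setting of the context, for all $\lambda>0$, $\sigma\in(0,1)$, $\theta\ge0$ and all $t\in[0,t_\infty)$, $$\eta(t)+\theta\big(\sigma x(t)^\top Qx(t)-2x(t)^\top PBKe(t^-)\big)\ge0\quad\text{and}\quad\eta(t)\ge0.$$ Moreover, for given $t_i$, $x(t_i)$ and $\eta(t_i)\ge0$, the next execution time given by the static rule $t^s_{i+1}=\inf\{t>t_i:\ \sigma x(t)^\top Qx(t)-2x(t)^\top PBKe(t^-)\le0\}$ is at most the next execution time $t^d_{i+1}$ given by the dynamic rule.
   Context: Consider $\dot x=Ax+Bu$, $x\in\mathbb{R}^n$, $u\in\mathbb{R}^m$, and a gain $K$ such that $A+BK$ is Hurwitz; let $P,Q$ be symmetric positive definite with $(A+BK)^\top P+P(A+BK)=-Q$, and $V(x)=x^\top Px$. The input is $u(t)=Kx(t_i)$ for $t\in[t_i,t_{i+1})$, with $e(t)=x(t_i)-x(t)$, so $\dot x=Ax+BK(x+e)$. $t_\infty=\lim t_i$ if infinitely many executions, else $+\infty$; $g(t^-)$ is the left limit. Dynamic event generator with parameters $\sigma\in(0,1)$, $\lambda>0$, $\theta\ge0$: $\dot\eta=-\lambda\eta+\sigma x^\top Qx-2x^\top PBKe$, $\eta(0)=0$ (resp. from $\eta(t_i)$ after $t_i$); $t_0=0$, $t_{i+1}=\inf\{t>t_i:\ \eta(t)+\theta(\sigma x(t)^\top Qx(t)-2x(t)^\top PBKe(t^-))\le0\}$. Assume $x(t_i)\ne0$ for all $i$. *)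

theory Defs
  imports "HOL-Analysis.Analysis"
begin

definition quad :: "real^'n^'n \<Rightarrow> real^'n \<Rightarrow> real" where
  "quad M x = x \<bullet> (M *v x)"

definition sym_mat :: "real^'n^'n \<Rightarrow> bool" where
  "sym_mat M \<longleftrightarrow> transpose M = M"

definition pos_def :: "real^'n^'n \<Rightarrow> bool" where
  "pos_def M \<longleftrightarrow> sym_mat M \<and> (\<forall>x. x \<noteq> 0 \<longrightarrow> quad M x > 0)"

definition complexify :: "real^'n^'n \<Rightarrow> complex^'n^'n" where
  "complexify M = (\<chi> i j. complex_of_real (M $ i $ j))"

definition hurwitz :: "real^'n^'n \<Rightarrow> bool" where
  "hurwitz M \<longleftrightarrow> (\<forall>(l::complex) (v::complex^'n).
      v \<noteq> 0 \<and> complexify M *v v = l *s v \<longrightarrow> Re l < 0)"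

text \<open>Flow of  dx/ds = A x + B K xi  from x(ti) = xi (input held at K xi), for s \<ge> ti.\<close>
definition lin_flow ::
  "real^'n^'n \<Rightarrow> real^'m^'n \<Rightarrow> real^'n^'m \<Rightarrow> real \<Rightarrow> real^'n \<Rightarrow> (real \<Rightarrow> real^'n) \<Rightarrow> bool" where
  "lin_flow A B K ti xi xf \<longleftrightarrow> xf ti = xi \<and>
     (\<forall>s\<ge>ti. (xf has_vector_derivative (A *v xf s + B *v (K *v xi))) (at s within {ti..}))"

definition trig ::
  "real \<Rightarrow> real^'n^'n \<Rightarrow> real^'n^'n \<Rightarrow> real^'m^'n \<Rightarrow> real^'n^'m \<Rightarrow> real^'n \<Rightarrow> real^'n \<Rightarrow> real" where
  "trig \<sigma> Q P B K x e = \<sigma> * quad Q x - 2 * (x \<bullet> ((P ** B ** K) *v e))"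

definition eta_flow ::
  "real \<Rightarrow> real \<Rightarrow> real^'n^'n \<Rightarrow> real^'n^'n \<Rightarrow> real^'m^'n \<Rightarrow> real^'n^'m \<Rightarrow> real \<Rightarrow> real^'n
    \<Rightarrow> real \<Rightarrow> (real \<Rightarrow> real^'n) \<Rightarrow> (real \<Rightarrow> real) \<Rightarrow> bool" where
  "eta_flow lam \<sigma> Q P B K ti xi eta0 xf ef \<longleftrightarrow> ef ti = eta0 \<and>
     (\<forall>s\<ge>ti. (ef has_real_derivative (- lam * ef s + trig \<sigma> Q P B K (xf s) (xi - xf s)))
               (at s within {ti..}))"

text \<open>Next execution time by the dynamic rule (infimum in the extended reals; Inf {} = \<infinity>).\<close>
definition next_dyn ::
  "real \<Rightarrow> real \<Rightarrow> real^'n^'n \<Rightarrow> real^'n^'n \<Rightarrow> real^'m^'n \<Rightarrow> real^'n^'m \<Rightarrow> real \<Rightarrow> real^'n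
    \<Rightarrow> (real \<Rightarrow> real^'n) \<Rightarrow> (real \<Rightarrow> real) \<Rightarrow> ereal" where
  "next_dyn \<theta> \<sigma> Q P B K ti xi xf ef =
     Inf {ereal s | s. s > ti \<and> ef s + \<theta> * trig \<sigma> Q P B K (xf s) (xi - xf s) \<le> 0}"

definition next_stat ::
  "real \<Rightarrow> real^'n^'n \<Rightarrow> real^'n^'n \<Rightarrow> real^'m^'n \<Rightarrow> real^'n^'m \<Rightarrow> real \<Rightarrow> real^'n
    \<Rightarrow> (real \<Rightarrow> real^'n) \<Rightarrow> ereal" where
  "next_stat \<sigma> Q P B K ti xi xf =
     Inf {ereal s | s. s > ti \<and> trig \<sigma> Q P B K (xf s) (xi - xf s) \<le> 0}"

text \<open>Left limit e(t^-); at t = 0 we use e(0) (the system starts at time 0).\<close>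
definition left_lim :: "(real \<Rightarrow> real^'n) \<Rightarrow> real \<Rightarrow> real^'n" where
  "left_lim e t = (if t = 0 then e 0 else Lim (at_left t) e)"

end

theory Submission
  imports Defs
begin

text \<open>Both rules fire at the first time after \<open>t\<^sub>i\<close> at which a trigger function becomes
  nonpositive. Before the next dynamic event the dynamic trigger function \<open>\<eta> + \<theta> r\<close>, where
  \<open>r = \<sigma> x\<^sup>TQx - 2 x\<^sup>TPBKe\<close>, is therefore nonnegative: it is so at \<open>t\<^sub>i\<close> because \<open>e(t\<^sub>i) = 0\<close>, and
  at the event itself by continuity. For \<open>\<theta> > 0\<close> this gives \<open>\<eta>' = -\<lambda>\<eta> + r \<ge> -(\<lambda> + 1/\<theta>)\<eta>\<close>, so
  \<open>\<eta>(t) exp((\<lambda> + 1/\<theta>)t)\<close> is nondecreasing and \<open>\<eta>\<close> stays nonnegative; induction over the events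
  covers \<open>[0, t\<^sub>\<infinity>)\<close>. Conversely, while the static trigger function \<open>r\<close> is positive, \<open>\<eta>(t) exp(\<lambda>t)\<close>
  is strictly increasing, so \<open>\<eta>\<close> and hence \<open>\<eta> + \<theta> r\<close> are positive: the dynamic rule cannot fire
  before the static one.\<close>

definition first_nonpos_after :: "real \<Rightarrow> (real \<Rightarrow> real) \<Rightarrow> ereal" where
  "first_nonpos_after a q = Inf {ereal s | s. s > a \<and> q s \<le> 0}"

lemma first_nonpos_after_ge: "ereal a \<le> first_nonpos_after a q"
  unfolding first_nonpos_after_def by (rule Inf_greatest) auto

lemma pos_before_first_nonpos:
  assumes "a < s" and "ereal s < first_nonpos_after a q"
  shows "q s > 0"
proof (rule ccontr)
  assume "\<not> q s > 0"
  with \<open>a < s\<close> have "first_nonpos_after a q \<le> ereal s"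
    unfolding first_nonpos_after_def by (intro Inf_lower) auto
  with assms(2) show False by simp
qed

lemma nonneg_upto_first_nonpos:
  fixes q :: "real \<Rightarrow> real"
  assumes cont: "continuous_on {a..} q" and qa: "q a \<ge> 0"
    and "a \<le> s" and s_le: "ereal s \<le> first_nonpos_after a q"
  shows "q s \<ge> 0"
proof (cases "s = a")
  case True
  with qa show ?thesis by simp
next
  case False
  with \<open>a \<le> s\<close> have "a < s" by simp
  show ?thesis
  proof (cases "ereal s < first_nonpos_after a q")
    case True
    with pos_before_first_nonpos[OF \<open>a < s\<close>] show ?thesis by (simp add: less_imp_le)
  next
    case False
    with s_le have at_first: "ereal s = first_nonpos_after a q" by simp
    have "isCont q s" using continuous_on_interior[OF cont] \<open>a < s\<close> by simp
    then have "(q \<longlongrightarrow> q s) (at_left s)" by (simp add: isCont_def filterlim_at_split)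
    moreover have "eventually (\<lambda>u. 0 \<le> q u) (at_left s)"
      using eventually_at_left_real[OF \<open>a < s\<close>]
    proof eventually_elim
      case (elim u)
      then have "a < u" "ereal u < first_nonpos_after a q" by (simp_all add: at_first[symmetric])
      then show ?case using pos_before_first_nonpos by (simp add: less_imp_le)
    qed
    ultimately show ?thesis by (rule tendsto_lowerbound) (simp add: trivial_limit_at_left_real)
  qed
qed

lemma first_nonpos_after_mono:
  assumes "\<And>s. a < s \<Longrightarrow> (\<And>u. a < u \<Longrightarrow> u \<le> s \<Longrightarrow> q u > 0) \<Longrightarrow> q' s > 0"
  shows "first_nonpos_after a q \<le> first_nonpos_after a q'"
  unfolding first_nonpos_after_def[of a q']
proof (rule Inf_greatest)
  fix y assume "y \<in> {ereal s | s. s > a \<and> q' s \<le> 0}"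
  then obtain s where s: "y = ereal s" "a < s" "q' s \<le> 0" by auto
  show "first_nonpos_after a q \<le> y"
  proof (rule ccontr)
    assume "\<not> first_nonpos_after a q \<le> y"
    then have "ereal s < first_nonpos_after a q" using s(1) by simp
    then have "q u > 0" if "a < u" "u \<le> s" for u
      using pos_before_first_nonpos[OF that(1), of q] that(2) by (meson ereal_less_eq(3) le_less_trans)
    with assms[OF s(2)] s(3) show False by fastforce
  qed
qed

lemma Lim_at_left_of_continuous_on:
  fixes g :: "real \<Rightarrow> 'a::real_normed_vector"
  assumes cont: "continuous_on {a..} g" and "a < t" and eq: "\<And>s. a \<le> s \<Longrightarrow> s < t \<Longrightarrow> f s = g s"
  shows "Lim (at_left t) f = g t"
proof (rule tendsto_Lim)
  show "\<not> trivial_limit (at_left t)" by (simp add: trivial_limit_at_left_real)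
  have "isCont g t" using continuous_on_interior[OF cont] \<open>a < t\<close> by simp
  then have "(g \<longlongrightarrow> g t) (at_left t)" by (simp add: isCont_def filterlim_at_split)
  moreover have "eventually (\<lambda>s. g s = f s) (at_left t)"
    using eventually_at_left_real[OF \<open>a < t\<close>] by eventually_elim (simp add: eq)
  ultimately show "(f \<longlongrightarrow> g t) (at_left t)" by (rule Lim_transform_eventually)
qed

lemma integrating_factor_has_derivative:
  assumes "(f has_real_derivative (- lam * f s + r s)) (at s within S)"
  shows "((\<lambda>u. exp (c * u) * f u) has_real_derivative exp (c * s) * ((c - lam) * f s + r s))
           (at s within S)"
  by (rule derivative_eq_intros assms refl | simp add: algebra_simps)+

lemma linear_ode_nonneg:
  fixes f r :: "real \<Rightarrow> real"
  assumes der: "\<And>s. s \<ge> a \<Longrightarrow> (f has_real_derivative (- lam * f s + r s)) (at s within {a..})"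
    and "f a \<ge> 0" and "a \<le> b" and "\<theta> \<ge> 0"
    and trigger: "\<And>s. a \<le> s \<Longrightarrow> s \<le> b \<Longrightarrow> f s + \<theta> * r s \<ge> 0"
  shows "f b \<ge> 0"
proof (cases "\<theta> = 0")
  case True
  then show ?thesis using trigger[of b] \<open>a \<le> b\<close> by simp
next
  case False
  with \<open>\<theta> \<ge> 0\<close> have "\<theta> > 0" by simp
  define c where "c = lam + 1 / \<theta>"
  have g_der: "\<And>s. s \<ge> a \<Longrightarrow> ((\<lambda>u. exp (c * u) * f u) has_real_derivative
      exp (c * s) * ((c - lam) * f s + r s)) (at s within {a..})"
    using integrating_factor_has_derivative der by blast
  have "exp (c * a) * f a \<le> exp (c * b) * f b"
  proof (rule DERIV_nonneg_imp_increasing_open[OF \<open>a \<le> b\<close>])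
    fix s assume s: "a < s" "s < b"
    have "(c - lam) * f s + r s = (f s + \<theta> * r s) / \<theta>"
      using \<open>\<theta> > 0\<close> by (simp add: c_def field_simps)
    also have "\<dots> \<ge> 0" using trigger[of s] s \<open>\<theta> > 0\<close> by simp
    finally show "\<exists>y. ((\<lambda>u. exp (c * u) * f u) has_real_derivative y) (at s) \<and> 0 \<le> y"
      using g_der[of s] s(1) at_within_interior[of s "{a..}"] by auto
  next
    have "continuous_on {a..} (\<lambda>u. exp (c * u) * f u)"
      by (rule DERIV_continuous_on) (use g_der in simp)
    then show "continuous_on {a..b} (\<lambda>u. exp (c * u) * f u)"
      by (rule continuous_on_subset) auto
  qed
  moreover have "exp (c * a) * f a \<ge> 0" using \<open>f a \<ge> 0\<close> by simp
  ultimately have "0 \<le> exp (c * b) * f b" by linarith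
  then show ?thesis by (simp add: zero_le_mult_iff)
qed

lemma linear_ode_pos:
  fixes f r :: "real \<Rightarrow> real"
  assumes der: "\<And>s. s \<ge> a \<Longrightarrow> (f has_real_derivative (- lam * f s + r s)) (at s within {a..})"
    and "f a \<ge> 0" and "a < b" and input_pos: "\<And>s. a < s \<Longrightarrow> s < b \<Longrightarrow> r s > 0"
  shows "f b > 0"
proof -
  have g_der: "((\<lambda>u. exp (lam * u) * f u) has_real_derivative exp (lam * s) * r s) (at s within {a..})"
    if "s \<ge> a" for s
    using integrating_factor_has_derivative[where f = f and r = r and c = lam, OF der[OF that]] by simp
  have "exp (lam * a) * f a < exp (lam * b) * f b"
  proof (rule DERIV_pos_imp_increasing_open[OF \<open>a < b\<close>])
    fix s assume s: "a < s" "s < b"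
    show "\<exists>y. ((\<lambda>u. exp (lam * u) * f u) has_real_derivative y) (at s) \<and> 0 < y"
      using g_der[of s] s(1) at_within_interior[of s "{a..}"] input_pos[OF s] by auto
  next
    have "continuous_on {a..} (\<lambda>u. exp (lam * u) * f u)"
      by (rule DERIV_continuous_on) (use g_der in simp)
    then show "continuous_on {a..b} (\<lambda>u. exp (lam * u) * f u)"
      by (rule continuous_on_subset) auto
  qed
  moreover have "exp (lam * a) * f a \<ge> 0" using \<open>f a \<ge> 0\<close> by simp
  ultimately have "0 < exp (lam * b) * f b" by linarith
  then show ?thesis by (simp add: zero_less_mult_iff)
qed

lemma next_dyn_eq_first_nonpos_after:
  "next_dyn \<theta> \<sigma> Q P B K ti xi xf ef
     = first_nonpos_after ti (\<lambda>s. ef s + \<theta> * trig \<sigma> Q P B K (xf s) (xi - xf s))"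
  by (simp add: next_dyn_def first_nonpos_after_def)

lemma next_stat_eq_first_nonpos_after:
  "next_stat \<sigma> Q P B K ti xi xf = first_nonpos_after ti (\<lambda>s. trig \<sigma> Q P B K (xf s) (xi - xf s))"
  by (simp add: next_stat_def first_nonpos_after_def)

lemma lin_flow_continuous_on:
  assumes "lin_flow A B K ti xi xf"
  shows "continuous_on {ti..} xf"
  using assms has_vector_derivative_continuous
  unfolding lin_flow_def continuous_on_eq_continuous_within by blast

lemma eta_flow_continuous_on:
  assumes "eta_flow lam \<sigma> Q P B K ti xi eta_i xf ef"
  shows "continuous_on {ti..} ef"
  using assms unfolding eta_flow_def by (intro DERIV_continuous_on) auto

lemma trig_continuous_on:
  assumes "continuous_on S xf"
  shows "continuous_on S (\<lambda>s. trig \<sigma> Q P B K (xf s) (xi - xf s))"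
  unfolding trig_def quad_def
  by (intro continuous_intros assms bounded_linear.continuous_on[OF matrix_vector_mul_bounded_linear])

lemma trigger_nonneg_before_next_dyn:
  assumes x_flow: "lin_flow A B K ti xi xf" and eta_flow: "eta_flow lam \<sigma> Q P B K ti xi eta_i xf ef"
    and "eta_i \<ge> 0" "\<theta> \<ge> 0" "\<sigma> \<ge> 0" "quad Q xi \<ge> 0"
    and "ti \<le> s" "ereal s \<le> next_dyn \<theta> \<sigma> Q P B K ti xi xf ef"
  shows "ef s + \<theta> * trig \<sigma> Q P B K (xf s) (xi - xf s) \<ge> 0"
proof -
  have start: "xf ti = xi" "ef ti = eta_i"
    using x_flow eta_flow by (simp_all add: lin_flow_def eta_flow_def)
  show ?thesis
  proof (rule nonneg_upto_first_nonpos[where a = ti and q = "\<lambda>s. ef s + \<theta> * trig \<sigma> Q P B K (xf s) (xi - xf s)"])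
    show "continuous_on {ti..} (\<lambda>s. ef s + \<theta> * trig \<sigma> Q P B K (xf s) (xi - xf s))"
      by (intro continuous_intros eta_flow_continuous_on[OF eta_flow]
          trig_continuous_on lin_flow_continuous_on[OF x_flow])
    show "0 \<le> ef ti + \<theta> * trig \<sigma> Q P B K (xf ti) (xi - xf ti)"
      using assms by (simp add: start trig_def)
  qed (use assms in \<open>simp_all add: next_dyn_eq_first_nonpos_after\<close>)
qed

lemma eta_nonneg_before_next_dyn:
  assumes x_flow: "lin_flow A B K ti xi xf" and eta_flow: "eta_flow lam \<sigma> Q P B K ti xi eta_i xf ef"
    and "eta_i \<ge> 0" "\<theta> \<ge> 0" "\<sigma> \<ge> 0" "quad Q xi \<ge> 0"
    and "ti \<le> s" and s_le: "ereal s \<le> next_dyn \<theta> \<sigma> Q P B K ti xi xf ef"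
  shows "ef s \<ge> 0"
proof (rule linear_ode_nonneg[where a = ti and \<theta> = \<theta> and f = ef and r = "\<lambda>u. trig \<sigma> Q P B K (xf u) (xi - xf u)"])
  fix u assume "ti \<le> u" "u \<le> s"
  moreover from this s_le have "ereal u \<le> next_dyn \<theta> \<sigma> Q P B K ti xi xf ef"
    by (meson ereal_less_eq(3) order_trans)
  ultimately show "0 \<le> ef u + \<theta> * trig \<sigma> Q P B K (xf u) (xi - xf u)"
    using trigger_nonneg_before_next_dyn[OF x_flow eta_flow] assms(3-6) by blast
qed (use assms in \<open>auto simp: eta_flow_def\<close>)

lemma next_stat_le_next_dyn:
  assumes eta_flow: "eta_flow lam \<sigma> Q P B K ti xi eta_i xf ef" and "eta_i \<ge> 0" "\<theta> \<ge> 0"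
  shows "next_stat \<sigma> Q P B K ti xi xf \<le> next_dyn \<theta> \<sigma> Q P B K ti xi xf ef"
  unfolding next_stat_eq_first_nonpos_after next_dyn_eq_first_nonpos_after
proof (rule first_nonpos_after_mono)
  fix s
  let ?r = "\<lambda>u. trig \<sigma> Q P B K (xf u) (xi - xf u)"
  assume "ti < s" and r_pos: "\<And>u. ti < u \<Longrightarrow> u \<le> s \<Longrightarrow> ?r u > 0"
  have "ef s > 0"
  proof (rule linear_ode_pos[where a = ti and r = ?r and f = ef])
    show "\<And>u. ti \<le> u \<Longrightarrow> (ef has_real_derivative - lam * ef u + ?r u) (at u within {ti..})"
      and "ef ti \<ge> 0"
      using eta_flow \<open>eta_i \<ge> 0\<close> by (auto simp: eta_flow_def)
  qed (use \<open>ti < s\<close> r_pos in auto)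
  moreover have "\<theta> * ?r s \<ge> 0" using \<open>\<theta> \<ge> 0\<close> r_pos[of s] \<open>ti < s\<close> by simp
  ultimately show "ef s + \<theta> * ?r s > 0" by simp
qed

locale event_triggered_run =
  fixes A :: "real^'n^'n" and B :: "real^'m^'n" and K :: "real^'n^'m" and P Q :: "real^'n^'n"
    and lam \<sigma> \<theta> :: real
    and x e :: "real \<Rightarrow> real^'n" and eta :: "real \<Rightarrow> real" and tau :: "nat \<Rightarrow> ereal"
    and xs :: "nat \<Rightarrow> real \<Rightarrow> real^'n" and etas :: "nat \<Rightarrow> real \<Rightarrow> real"
  assumes theta_nonneg: "\<theta> \<ge> 0" and sigma_nonneg: "\<sigma> \<ge> 0" and Q_psd: "\<And>y. quad Q y \<ge> 0"
    and eta0: "eta 0 = 0" and tau0: "tau 0 = 0"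
    and tau_inf: "\<And>i. tau i = \<infinity> \<Longrightarrow> tau (Suc i) = \<infinity>"
    and step: "\<And>i. tau i \<noteq> \<infinity> \<Longrightarrow>
        let ti = real_of_ereal (tau i) in
          lin_flow A B K ti (x ti) (xs i)
        \<and> eta_flow lam \<sigma> Q P B K ti (x ti) (eta ti) (xs i) (etas i)
        \<and> tau (Suc i) = next_dyn \<theta> \<sigma> Q P B K ti (x ti) (xs i) (etas i)
        \<and> (\<forall>s. ti \<le> s \<and> ereal s \<le> tau (Suc i) \<longrightarrow> x s = xs i s \<and> eta s = etas i s)
        \<and> (\<forall>s. ti \<le> s \<and> ereal s < tau (Suc i) \<longrightarrow> e s = x ti - x s)"
begin

lemma step_at:
  assumes "tau i = ereal r"
  shows "lin_flow A B K r (x r) (xs i)"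
    and "eta_flow lam \<sigma> Q P B K r (x r) (eta r) (xs i) (etas i)"
    and "tau (Suc i) = next_dyn \<theta> \<sigma> Q P B K r (x r) (xs i) (etas i)"
    and "\<And>s. r \<le> s \<Longrightarrow> ereal s \<le> tau (Suc i) \<Longrightarrow> x s = xs i s \<and> eta s = etas i s"
    and "\<And>s. r \<le> s \<Longrightarrow> ereal s < tau (Suc i) \<Longrightarrow> e s = x r - x s"
  using step[of i, unfolded assms Let_def real_of_ereal.simps(1), OF PInfty_neq_ereal(1)] by blast+

lemma finite_event_time:
  assumes "tau i \<noteq> \<infinity>"
  shows "\<exists>r. tau i = ereal r \<and> 0 \<le> r \<and> 0 \<le> eta r"
  using assms
proof (induction i)
  case 0
  then show ?case using tau0 eta0 by (simp add: zero_ereal_def)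
next
  case (Suc i)
  then obtain r where r: "tau i = ereal r" "0 \<le> r" "0 \<le> eta r"
    using tau_inf by blast
  note next_event = step_at(3)[OF r(1)]
  have "ereal r \<le> tau (Suc i)"
    using first_nonpos_after_ge by (simp add: next_event next_dyn_eq_first_nonpos_after)
  with Suc.prems obtain b where b: "tau (Suc i) = ereal b" "r \<le> b"
    by (cases "tau (Suc i)") auto
  have "0 \<le> etas i b"
    using eta_nonneg_before_next_dyn[OF step_at(1,2)[OF r(1)]] b r next_event
      theta_nonneg sigma_nonneg Q_psd by simp
  then show ?case using step_at(4)[OF r(1), of b] b r by auto
qed

lemma trigger_nonneg_after_event:
  assumes ti: "tau i = ereal r" and "r < t" and t_le: "ereal t \<le> tau (Suc i)"
  shows "eta t + \<theta> * trig \<sigma> Q P B K (x t) (left_lim e t) \<ge> 0 \<and> eta t \<ge> 0"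
proof -
  obtain "0 \<le> r" "0 \<le> eta r" using finite_event_time[of i] ti by auto
  note x_flow = step_at(1)[OF ti] and eta_flow = step_at(2)[OF ti]
  note next_event = step_at(3)[OF ti]
  have "left_lim e t = x r - xs i t"
  proof -
    have "Lim (at_left t) e = x r - xs i t"
    proof (rule Lim_at_left_of_continuous_on[where g = "\<lambda>s. x r - xs i s"])
      show "continuous_on {r..} (\<lambda>s. x r - xs i s)"
        by (intro continuous_intros lin_flow_continuous_on[OF x_flow])
      fix s assume "r \<le> s" "s < t"
      moreover from \<open>s < t\<close> have "ereal s < tau (Suc i)"
        using t_le less_le_trans[of "ereal s" "ereal t"] by simp
      ultimately show "e s = x r - xs i s" using step_at(4,5)[OF ti] by auto
    qed (fact \<open>r < t\<close>)
    then show ?thesis using \<open>0 \<le> r\<close> \<open>r < t\<close> by (simp add: left_lim_def)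
  qed
  moreover have "x t = xs i t" "eta t = etas i t" using step_at(4)[OF ti] \<open>r < t\<close> t_le by auto
  ultimately show ?thesis
    using trigger_nonneg_before_next_dyn[OF x_flow eta_flow] eta_nonneg_before_next_dyn[OF x_flow eta_flow]
      \<open>0 \<le> eta r\<close> theta_nonneg sigma_nonneg Q_psd \<open>r < t\<close> t_le next_event by simp
qed

lemma trigger_nonneg_at_start:
  assumes "0 < tau n"
  shows "eta 0 + \<theta> * trig \<sigma> Q P B K (x 0) (left_lim e 0) \<ge> 0 \<and> eta 0 \<ge> 0"
proof -
  obtain i where "\<not> 0 < tau i" "0 < tau (Suc i)"
    using ex_least_nat_less[of "\<lambda>j. 0 < tau j", OF assms] tau0 by auto
  moreover from this obtain r where "tau i = ereal r" "0 \<le> r"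
    using finite_event_time[of i] by fastforce
  ultimately have "tau i = ereal 0" by (simp add: zero_ereal_def)
  then have "e 0 = 0" using step_at(5)[of i 0] \<open>0 < tau (Suc i)\<close> by (simp add: zero_ereal_def)
  then show ?thesis
    using eta0 theta_nonneg sigma_nonneg Q_psd by (simp add: left_lim_def trig_def)
qed

lemma trigger_nonneg_before_accumulation:
  assumes "0 \<le> t" and "ereal t < (SUP i. tau i)"
  shows "eta t + \<theta> * trig \<sigma> Q P B K (x t) (left_lim e t) \<ge> 0 \<and> eta t \<ge> 0"
proof -
  obtain n where "ereal t < tau n" using assms(2) by (auto simp: less_SUP_iff)
  show ?thesis
  proof (cases "t = 0")
    case True
    then show ?thesis using trigger_nonneg_at_start \<open>ereal t < tau n\<close> by (simp add: zero_ereal_def)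
  next
    case False
    with \<open>0 \<le> t\<close> have "tau 0 < ereal t" by (simp add: tau0 zero_ereal_def)
    with \<open>ereal t < tau n\<close> obtain i where "\<not> ereal t \<le> tau i" "ereal t \<le> tau (Suc i)"
      using ex_least_nat_less[of "\<lambda>j. ereal t \<le> tau j" n] by (meson less_imp_le not_le order_refl)
    then have "tau i < ereal t" "ereal t \<le> tau (Suc i)" by auto
    moreover from this obtain r where "tau i = ereal r"
      using finite_event_time[of i] by fastforce
    ultimately show ?thesis using trigger_nonneg_after_event by simp
  qed
qed

end

theorem mainTheorem5:
  fixes A :: "real^'n^'n" and B :: "real^'m^'n" and K :: "real^'n^'m"
    and P Q :: "real^'n^'n"
    and lam \<sigma> \<theta> :: real
    and x :: "real \<Rightarrow> real^'n" and e :: "real \<Rightarrow> real^'n" and eta :: "real \<Rightarrow> real"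
    and tau :: "nat \<Rightarrow> ereal"
    and xs :: "nat \<Rightarrow> real \<Rightarrow> real^'n" and etas :: "nat \<Rightarrow> real \<Rightarrow> real"
  assumes hurw: "hurwitz (A + B ** K)"
    and P_pd: "pos_def P" and Q_pd: "pos_def Q"
    and lyap: "transpose (A + B ** K) ** P + P ** (A + B ** K) = - Q"
    and lam_pos: "lam > 0" and sigma: "0 < \<sigma>" "\<sigma> < 1" and theta: "\<theta> \<ge> 0"
    and eta0: "eta 0 = 0"
    and tau0: "tau 0 = 0"
    and tau_inf: "\<And>i. tau i = \<infinity> \<Longrightarrow> tau (Suc i) = \<infinity>"
    and step: "\<And>i. tau i \<noteq> \<infinity> \<Longrightarrow>
        let ti = real_of_ereal (tau i) in
          lin_flow A B K ti (x ti) (xs i)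
        \<and> eta_flow lam \<sigma> Q P B K ti (x ti) (eta ti) (xs i) (etas i)
        \<and> tau (Suc i) = next_dyn \<theta> \<sigma> Q P B K ti (x ti) (xs i) (etas i)
        \<and> (\<forall>s. ti \<le> s \<and> ereal s \<le> tau (Suc i) \<longrightarrow> x s = xs i s \<and> eta s = etas i s)
        \<and> (\<forall>s. ti \<le> s \<and> ereal s < tau (Suc i) \<longrightarrow> e s = x ti - x s)
        \<and> x ti \<noteq> 0"
  shows "(\<forall>t. 0 \<le> t \<and> ereal t < (SUP i. tau i) \<longrightarrow>
            eta t + \<theta> * trig \<sigma> Q P B K (x t) (left_lim e t) \<ge> 0 \<and> eta t \<ge> 0)
       \<and> (\<forall>ti xi eta_i xf ef.
            xi \<noteq> 0 \<and> eta_i \<ge> 0 \<and> lin_flow A B K ti xi xf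
            \<and> eta_flow lam \<sigma> Q P B K ti xi eta_i xf ef
            \<longrightarrow> next_stat \<sigma> Q P B K ti xi xf \<le> next_dyn \<theta> \<sigma> Q P B K ti xi xf ef)"
proof -
  have Q_psd: "quad Q y \<ge> 0" for y
    using Q_pd by (cases "y = 0") (auto simp: pos_def_def quad_def less_imp_le)
  interpret event_triggered_run A B K P Q lam \<sigma> \<theta> x e eta tau xs etas
    by unfold_locales (simp_all add: theta less_imp_le[OF sigma(1)] Q_psd eta0 tau0 tau_inf step[unfolded Let_def])
  show ?thesis
    using trigger_nonneg_before_accumulation next_stat_le_next_dyn theta by blast
qed

end
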